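(* Let $R$ be an NC-nilpotent algebra, $\overline S\subset R_{ab}-\{0\}$ a multiplicative subset, and $S=\pi^{-1}(\overline S)\subset R$ its preimage under the abelianization map $\pi:R\to R_{ab}$. Then the Ore localization $R[S^{-1}]$ is NC-nilpotent, and for every $d\ge0$ $$\mathrm{gr}^d_F(R[S^{-1}])\cong \mathrm{gr}^d_F(R)[\overline S^{-1}],$$ where on the right is the usual module of fractions of the $R_{ab}$-module $\mathrm{gr}^d_F(R)$.
   Context: Algebras are associative unital $\mathbf{C}$-algebras. $R_{ab}=R/[R,R]$. NC-filtration: with $R^{\rm Lie}_1=R$, $R^{\rm Lie}_m=[R,R^{\rm Lie}_{m-1}]$ ($[a,b]=ab-ba$), $F^dR=\sum_m\sum_{i_1+\dots+i_m-m=d}R\,R^{\rm Lie}_{i_1}R\cdots R\,R^{\rm Lie}_{i_m}R$; $\mathrm{gr}^d_F R=F^dR/F^{d+1}R$, which is a module over $\mathrm{gr}^0_FR=R_{ab}$. $R$ is NC-nilpotent if $F^iR=0$ for $i\gg0$. For $R$ NC-nilpotent, the set $S$ satisfies the left and right Ore conditions, so the ring of fractions $R[S^{-1}]$ exists: it is equipped with a homomorphism $R\to R[S^{-1}]$ sending elements of $S$ to invertible elements and is universal with this property. *)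

theory Defs
  imports Complex_Main
begin

text \<open>An algebra is a type of class ring_1 (the whole type is the ring)
  together with a C-algebra structure, i.e. a ring homomorphism from complex into the centre.
  Quotients (R_ab, gr^d, module of fractions) are rendered via representatives.\<close>

definition complex_algebra_str :: "(complex \<Rightarrow> 'a::ring_1) \<Rightarrow> bool" where
  "complex_algebra_str \<iota> \<longleftrightarrow> \<iota> 1 = 1 \<and> (\<forall>x y. \<iota> (x + y) = \<iota> x + \<iota> y)
     \<and> (\<forall>x y. \<iota> (x * y) = \<iota> x * \<iota> y) \<and> (\<forall>c a. \<iota> c * a = a * \<iota> c)"

definition ring_hom_fun :: "('a::ring_1 \<Rightarrow> 'b::ring_1) \<Rightarrow> bool" where
  "ring_hom_fun \<phi> \<longleftrightarrow> \<phi> 1 = 1 \<and> (\<forall>a b. \<phi> (a + b) = \<phi> a + \<phi> b \<and> \<phi> (a * b) = \<phi> a * \<phi> b)"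

text \<open>Additive subgroup generated by a set (= C-linear span for the sets below,
  since they are stable under multiplication by scalars from R).\<close>
inductive_set addcl :: "'a::ab_group_add set \<Rightarrow> 'a set" for X where
  zero: "0 \<in> addcl X"
| base: "x \<in> X \<Longrightarrow> x \<in> addcl X"
| add: "x \<in> addcl X \<Longrightarrow> y \<in> addcl X \<Longrightarrow> x + y \<in> addcl X"
| neg: "x \<in> addcl X \<Longrightarrow> - x \<in> addcl X"

text \<open>lie_pow k = R^Lie_(k+1): lie_pow 0 = R, lie_pow (k+1) = [R, lie_pow k].\<close>
primrec lie_pow :: "nat \<Rightarrow> 'a::ring_1 set" where
  "lie_pow 0 = UNIV"
| "lie_pow (Suc k) = addcl {a * x - x * a | a x. x \<in> lie_pow k}"

text \<open>F^d R: span of products a0 x1 a1 x2 a2 ... xm am with x_j in R^Lie_(k_j+1),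
  m >= 1, and k_1 + ... + k_m = d (i.e. i_1+...+i_m - m = d with i_j = k_j + 1).\<close>
definition nc_filt :: "nat \<Rightarrow> 'a::ring_1 set" where
  "nc_filt d = addcl {a * prod_list (map2 (\<lambda>x b. x * b) xs bs) | a xs bs ks.
      ks \<noteq> [] \<and> length xs = length ks \<and> length bs = length ks \<and> sum_list ks = d
      \<and> (\<forall>j<length ks. xs ! j \<in> lie_pow (ks ! j))}"

definition nc_nilpotent :: "'a::ring_1 itself \<Rightarrow> bool" where
  "nc_nilpotent _ \<longleftrightarrow> (\<exists>N. \<forall>i\<ge>N. nc_filt i = ({0} :: 'a set))"

text \<open>R_ab = R / F^1 R (F^1 R is the two-sided ideal generated by commutators);
  the element pi(a) of R_ab is represented by its coset.\<close>
definition ab_class :: "'a::ring_1 \<Rightarrow> 'a set" where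
  "ab_class a = {b. b - a \<in> nc_filt 1}"

definition ab_mult_subset :: "'a::ring_1 set set \<Rightarrow> bool" where
  "ab_mult_subset Sbar \<longleftrightarrow> Sbar \<subseteq> range ab_class \<and> ab_class 0 \<notin> Sbar \<and> ab_class 1 \<in> Sbar
     \<and> (\<forall>a b. ab_class a \<in> Sbar \<longrightarrow> ab_class b \<in> Sbar \<longrightarrow> ab_class (a * b) \<in> Sbar)"

definition ab_preimage :: "'a::ring_1 set set \<Rightarrow> 'a set" where
  "ab_preimage Sbar = {s. ab_class s \<in> Sbar}"

definition ring_of_fractions :: "'a::ring_1 set \<Rightarrow> ('a \<Rightarrow> 'b::ring_1) \<Rightarrow> bool" where
  "ring_of_fractions S \<phi> \<longleftrightarrow> ring_hom_fun \<phi>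
     \<and> (\<forall>s\<in>S. \<exists>u. u * \<phi> s = 1 \<and> \<phi> s * u = 1)
     \<and> (\<forall>q. \<exists>a. \<exists>s\<in>S. q * \<phi> s = \<phi> a)
     \<and> (\<forall>a. \<phi> a = 0 \<longleftrightarrow> (\<exists>s\<in>S. a * s = 0))"

text \<open>Equality of fractions [m]/pi(s) = [m']/pi(s') in gr^d_F(R)[Sbar^{-1}]
  (m, m' in F^d R, s, s' in S): exists t in S with t(s' m - s m') in F^(d+1) R.\<close>
definition frac_rel :: "nat \<Rightarrow> 'a::ring_1 set \<Rightarrow> 'a \<times> 'a \<Rightarrow> 'a \<times> 'a \<Rightarrow> bool" where
  "frac_rel d S p p' \<longleftrightarrow> (\<exists>t\<in>S. t * (snd p' * fst p - snd p * fst p') \<in> nc_filt (Suc d))"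

text \<open>f (on representatives) induces an isomorphism of R_ab-modules
  gr^d_F(R)[Sbar^{-1}] -> gr^d_F(Q), where R_ab acts on gr^d_F(Q) through phi.\<close>
definition gr_frac_iso :: "nat \<Rightarrow> 'a::ring_1 set \<Rightarrow> ('a \<Rightarrow> 'b::ring_1) \<Rightarrow> ('a \<times> 'a \<Rightarrow> 'b) \<Rightarrow> bool" where
  "gr_frac_iso d S \<phi> f \<longleftrightarrow>
     (\<forall>m\<in>nc_filt d. \<forall>s\<in>S. f (m, s) \<in> nc_filt d)
   \<and> (\<forall>m\<in>nc_filt d. \<forall>s\<in>S. \<forall>m'\<in>nc_filt d. \<forall>s'\<in>S.
        frac_rel d S (m, s) (m', s') \<longleftrightarrow> f (m, s) - f (m', s') \<in> nc_filt (Suc d))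
   \<and> (\<forall>q\<in>nc_filt d. \<exists>m\<in>nc_filt d. \<exists>s\<in>S. f (m, s) - q \<in> nc_filt (Suc d))
   \<and> (\<forall>m\<in>nc_filt d. \<forall>s\<in>S. \<forall>m'\<in>nc_filt d. \<forall>s'\<in>S.
        f (m, s) + f (m', s') - f (s' * m + s * m', s * s') \<in> nc_filt (Suc d))
   \<and> (\<forall>a. \<forall>m\<in>nc_filt d. \<forall>s\<in>S. \<phi> a * f (m, s) - f (a * m, s) \<in> nc_filt (Suc d))"

end

theory Submission
  imports Defs
begin

text \<open>Write \<open>Q\<close> for the ring of fractions and \<open>\<phi> : R \<rightarrow> Q\<close>. The heart of the proof is
  \<open>F\<^sup>d Q = {\<phi>(m) \<phi>(s)\<inverse> | m \<in> F\<^sup>d R, s \<in> S}\<close>. The right-hand side lies in \<open>F\<^sup>d Q\<close>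
  because \<open>F\<^sup>d\<close> is a two-sided ideal preserved by ring homomorphisms. Conversely, it is a
  two-sided ideal of \<open>Q\<close>: it is a left ideal because
  \<open>s\<inverse> m = m s\<inverse> + s\<inverse> [m, s] s\<inverse>\<close> with \<open>[m, s]\<close> one step deeper in the filtration,
  which allows a descending induction starting at the nilpotence degree of \<open>R\<close>. Hence it
  contains the commutators and products generating \<open>F\<^sup>d Q\<close>. Nilpotence of \<open>Q\<close> follows at
  once. Modulo \<open>F\<^sup>d\<^sup>+\<^sup>1 Q\<close> every element of \<open>Q\<close> commutes with \<open>F\<^sup>d Q\<close>, so
  \<open>m/s \<mapsto> \<phi>(m) \<phi>(s)\<inverse>\<close> is additive and well defined on \<open>gr\<^sup>d\<close>; it is injective since
  \<open>\<phi>(x) \<in> F\<^sup>d\<^sup>+\<^sup>1 Q\<close> gives \<open>x t \<in> F\<^sup>d\<^sup>+\<^sup>1 R\<close> for some \<open>t \<in> S\<close>, and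
  \<open>x t \<equiv> t x\<close> modulo \<open>F\<^sup>d\<^sup>+\<^sup>1 R\<close>.\<close>

section \<open>Additive closure\<close>

lemma addcl_least:
  assumes "X \<subseteq> Y" "0 \<in> Y" "\<And>a b. a \<in> Y \<Longrightarrow> b \<in> Y \<Longrightarrow> a + b \<in> Y" "\<And>a. a \<in> Y \<Longrightarrow> - a \<in> Y"
  shows "addcl X \<subseteq> Y"
proof
  fix x assume "x \<in> addcl X" then show "x \<in> Y"
    by (induction rule: addcl.induct) (use assms in auto)
qed

lemma addcl_mono: "X \<subseteq> Y \<Longrightarrow> addcl X \<subseteq> addcl Y"
  by (rule addcl_least) (auto intro: addcl.intros)

lemma addcl_diff: "x \<in> addcl X \<Longrightarrow> y \<in> addcl X \<Longrightarrow> x - y \<in> addcl X"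
  using addcl.add[OF _ addcl.neg[of y]] by (metis diff_conv_add_uminus)

lemma addcl_mult_left:
  fixes c :: "'a::ring_1"
  assumes "\<And>x. x \<in> X \<Longrightarrow> c * x \<in> addcl Z" "y \<in> addcl X"
  shows "c * y \<in> addcl Z"
  using assms(2) by (induction rule: addcl.induct)
    (auto simp: distrib_left intro: addcl.intros assms(1))

lemma addcl_mult_right:
  fixes c :: "'a::ring_1"
  assumes "\<And>x. x \<in> X \<Longrightarrow> x * c \<in> addcl Z" "y \<in> addcl X"
  shows "y * c \<in> addcl Z"
  using assms(2) by (induction rule: addcl.induct)
    (auto simp: distrib_right intro: addcl.intros assms(1))

lemma addcl_mult:
  fixes x :: "'a::ring_1"
  assumes "\<And>a b. a \<in> X \<Longrightarrow> b \<in> Y \<Longrightarrow> a * b \<in> addcl Z" "x \<in> addcl X" "y \<in> addcl Y"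
  shows "x * y \<in> addcl Z"
  by (rule addcl_mult_right[OF addcl_mult_left[OF assms(1)] assms(2)]) (use assms(3) in simp_all)

lemma addcl_image:
  assumes add: "\<And>x y. f (x + y) = f x + f y" and "y \<in> addcl X"
  shows "f y \<in> addcl (f ` X)"
proof -
  have f0: "f 0 = 0" using add[of 0 0] by simp
  have "f (- x) = - f x" for x using add[of x "- x"] f0 by (simp add: add_eq_0_iff)
  with \<open>y \<in> addcl X\<close> show ?thesis
    by (induction rule: addcl.induct) (auto simp: f0 add intro: addcl.intros)
qed

lemma ring_hom_fun_simps:
  assumes "ring_hom_fun \<phi>"
  shows "\<phi> 1 = 1" "\<phi> (a + b) = \<phi> a + \<phi> b" "\<phi> (a * b) = \<phi> a * \<phi> b"
    and "\<phi> 0 = 0" "\<phi> (a - b) = \<phi> a - \<phi> b" "\<phi> (- a) = - \<phi> a"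
proof -
  show add: "\<phi> (a + b) = \<phi> a + \<phi> b" for a b using assms unfolding ring_hom_fun_def by blast
  show "\<phi> 1 = 1" "\<phi> (a * b) = \<phi> a * \<phi> b" using assms unfolding ring_hom_fun_def by blast+
  show zero: "\<phi> 0 = 0" using add[of 0 0] by simp
  show diff: "\<phi> (a - b) = \<phi> a - \<phi> b" for a b using add[of "a - b" b] by (simp add: eq_diff_eq)
  show "\<phi> (- a) = - \<phi> a" using diff[of 0 a] zero by simp
qed

section \<open>Lie powers and the NC-filtration\<close>

lemma commutator_mem_lie_pow_Suc: "x \<in> lie_pow k \<Longrightarrow> x * r - r * x \<in> (lie_pow (Suc k) :: 'a::ring_1 set)"
proof -
  assume "x \<in> lie_pow k"
  then have "r * x - x * r \<in> lie_pow (Suc k)" by (auto intro: addcl.base)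
  from addcl.neg[OF this[unfolded lie_pow.simps]] show ?thesis by simp
qed

lemma commutator_mem_lie_pow_1: "x * r - r * x \<in> (lie_pow (Suc 0) :: 'a::ring_1 set)"
  by (rule commutator_mem_lie_pow_Suc) simp

lemma lie_pow_Suc_subset: "lie_pow (Suc k) \<subseteq> (lie_pow k :: 'a::ring_1 set)"
proof (induction k)
  case (Suc k)
  show ?case unfolding lie_pow.simps(2)[of "Suc k"] lie_pow.simps(2)[of k]
    by (rule addcl_mono) (use Suc[unfolded lie_pow.simps(2)[of k]] in auto)
qed simp

lemma lie_pow_antimono: "k' \<le> k \<Longrightarrow> lie_pow k \<subseteq> (lie_pow k' :: 'a::ring_1 set)"
  by (induction k rule: dec_induct) (use lie_pow_Suc_subset in blast)+

lemma ring_hom_lie_pow: "ring_hom_fun \<phi> \<Longrightarrow> x \<in> lie_pow k \<Longrightarrow> \<phi> x \<in> lie_pow k"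
proof (induction k arbitrary: x)
  case (Suc k)
  note hom = ring_hom_fun_simps[OF Suc.prems(1)]
  have "\<phi> x \<in> addcl (\<phi> ` {a * x - x * a |a x. x \<in> lie_pow k})"
    using Suc.prems(2) by (simp add: addcl_image hom(2))
  also have "\<dots> \<subseteq> lie_pow (Suc k)"
    unfolding lie_pow.simps
    by (rule addcl_mono) (use Suc.IH[OF Suc.prems(1)] in \<open>fastforce simp: hom\<close>)
  finally show ?case .
qed simp

inductive nc_monomial :: "nat \<Rightarrow> 'a::ring_1 \<Rightarrow> bool" where
  one: "nc_monomial 0 1"
| step: "x \<in> lie_pow k \<Longrightarrow> nc_monomial d h \<Longrightarrow> nc_monomial (k + d) (x * b * h)"

lemma nc_monomial_prod_list:
  fixes xs bs :: "'a::ring_1 list"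
  assumes "length xs = length ks" "length bs = length ks" "\<forall>j<length ks. xs ! j \<in> lie_pow (ks ! j)"
  shows "nc_monomial (sum_list ks) (prod_list (map2 (\<lambda>x b. x * b) xs bs))"
  using assms
proof (induction ks arbitrary: xs bs)
  case (Cons k ks)
  then obtain x xs' b bs' where xs: "xs = x # xs'" and bs: "bs = b # bs'"
    by (metis length_Suc_conv)
  with Cons.prems have "x \<in> lie_pow k" "\<forall>j<length ks. xs' ! j \<in> lie_pow (ks ! j)" by force+
  with Cons xs bs show ?case
    using nc_monomial.step[of x k "sum_list ks" _ b] by (simp add: mult.assoc)
qed (simp add: nc_monomial.one)

lemma nc_monomial_imp_prod_list:
  fixes h :: "'a::ring_1"
  assumes "nc_monomial d h"
  shows "\<exists>xs bs ks. length xs = length ks \<and> length bs = length ks \<and> sum_list ks = d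
    \<and> (\<forall>j<length ks. xs ! j \<in> lie_pow (ks ! j)) \<and> h = prod_list (map2 (\<lambda>x b. x * b) xs bs)"
  using assms
proof (induction rule: nc_monomial.induct)
  case one
  show ?case by (rule exI[of _ "[]"])+ simp
next
  case (step x k d h b)
  then obtain xs bs ks where "length xs = length ks" "length bs = length ks" "sum_list ks = d"
    "\<forall>j<length ks. xs ! j \<in> lie_pow (ks ! j)" "h = prod_list (map2 (\<lambda>x b. x * b) xs bs)"
    by blast
  with step.hyps(1) show ?case
    by (intro exI[of _ "x # xs"] exI[of _ "b # bs"] exI[of _ "k # ks"])
      (auto simp: mult.assoc nth_Cons split: nat.split)
qed

definition nc_filt_gens :: "nat \<Rightarrow> 'a::ring_1 set" where
  "nc_filt_gens d = {a * h | a h. nc_monomial d h}"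

lemma nc_filt_0: "nc_filt 0 = (UNIV :: 'a::ring_1 set)"
proof -
  have "x \<in> nc_filt 0" for x :: 'a
    unfolding nc_filt_def
    by (intro addcl.base CollectI exI[of _ x] exI[of _ "[1]"] exI[of _ "[0]"]) simp
  then show ?thesis by auto
qed

lemma nc_filt_eq_addcl_gens: "nc_filt d = addcl (nc_filt_gens d :: 'a::ring_1 set)"
proof
  show "nc_filt d \<subseteq> addcl (nc_filt_gens d)"
    unfolding nc_filt_def nc_filt_gens_def
    by (rule addcl_mono) (auto dest: nc_monomial_prod_list)
  have "nc_filt_gens d \<subseteq> (nc_filt d :: 'a set)"
  proof
    fix y :: 'a assume "y \<in> nc_filt_gens d"
    then obtain a h where y: "y = a * h" and "nc_monomial d h" unfolding nc_filt_gens_def by blast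
    then obtain xs bs ks where ks: "length xs = length ks" "length bs = length ks" "sum_list ks = d"
      "\<forall>j<length ks. xs ! j \<in> lie_pow (ks ! j)" "h = prod_list (map2 (\<lambda>x b. x * b) xs bs)"
      using nc_monomial_imp_prod_list by blast
    show "y \<in> nc_filt d"
    proof (cases "ks = []")
      case True
      then show ?thesis using ks(3) nc_filt_0 by auto
    next
      case False
      then show ?thesis unfolding nc_filt_def y
        by (intro addcl.base CollectI exI[of _ a] exI[of _ xs] exI[of _ bs] exI[of _ ks])
          (use ks in auto)
    qed
  qed
  then show "addcl (nc_filt_gens d) \<subseteq> (nc_filt d :: 'a set)"
    by (rule addcl_least) (auto simp: nc_filt_def intro: addcl.intros)
qed

lemma nc_monomial_mult_right:
  "nc_monomial i (h :: 'a::ring_1) \<Longrightarrow> \<exists>a h'. h * c = a * h' \<and> nc_monomial i h'"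
proof (induction arbitrary: c rule: nc_monomial.induct)
  case one
  show ?case by (intro exI[of _ c] exI[of _ 1]) (simp add: nc_monomial.one)
next
  case (step x k d h b)
  obtain a h' where "h * c = a * h'" "nc_monomial d h'" using step.IH by blast
  then show ?case using nc_monomial.step[OF step.hyps(1) \<open>nc_monomial d h'\<close>, of "b * a"]
    by (intro exI[of _ 1] exI[of _ "x * (b * a) * h'"]) (simp add: mult.assoc)
qed

lemma nc_monomial_mult:
  "nc_monomial i (h :: 'a::ring_1) \<Longrightarrow> nc_monomial j h' \<Longrightarrow> nc_monomial (i + j) (h * h')"
proof (induction rule: nc_monomial.induct)
  case (step x k d h b)
  then show ?case using nc_monomial.step[OF step.hyps(1) step.IH[OF step.prems], of b]
    by (simp add: mult.assoc add.assoc)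
qed simp

lemma nc_monomial_antimono: "nc_monomial i (h :: 'a::ring_1) \<Longrightarrow> j \<le> i \<Longrightarrow> nc_monomial j h"
proof (induction arbitrary: j rule: nc_monomial.induct)
  case one
  then show ?case by (simp add: nc_monomial.one)
next
  case (step x k d h b)
  have "x \<in> lie_pow (min k j)" using step.hyps(1) lie_pow_antimono[of "min k j" k] by auto
  moreover have "nc_monomial (j - min k j) h" using step by auto
  ultimately show ?case using nc_monomial.step[of x "min k j" "j - min k j" h b] by simp
qed

lemma nc_monomial_ring_hom: "nc_monomial d h \<Longrightarrow> ring_hom_fun \<phi> \<Longrightarrow> nc_monomial d (\<phi> h)"
proof (induction rule: nc_monomial.induct)
  case one
  then show ?case by (simp add: ring_hom_fun_simps nc_monomial.one)
next
  case (step x k d h b)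
  then show ?case
    using nc_monomial.step[OF ring_hom_lie_pow step.IH] by (simp add: ring_hom_fun_simps)
qed

lemma nc_filt_gens_mult:
  "y \<in> nc_filt_gens i \<Longrightarrow> z \<in> nc_filt_gens j \<Longrightarrow> y * z \<in> (nc_filt_gens (i + j) :: 'a::ring_1 set)"
proof -
  assume "y \<in> nc_filt_gens i" "z \<in> nc_filt_gens j"
  then obtain a h a' h' where y: "y = a * h" "nc_monomial i h" and z: "z = a' * h'" "nc_monomial j h'"
    unfolding nc_filt_gens_def by blast
  obtain c g where cg: "h * a' = c * g" "nc_monomial i g" using nc_monomial_mult_right[OF y(2)] by blast
  have "y * z = a * (h * a') * h'" using y(1) z(1) by (simp add: mult.assoc)
  also have "\<dots> = (a * c) * (g * h')" using cg(1) by (simp add: mult.assoc)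
  finally show ?thesis
    using nc_monomial_mult[OF cg(2) z(2)] unfolding nc_filt_gens_def by blast
qed

lemma nc_filt_zero: "0 \<in> (nc_filt d :: 'a::ring_1 set)"
  unfolding nc_filt_eq_addcl_gens by (rule addcl.zero)

lemma nc_filt_add: "y \<in> nc_filt d \<Longrightarrow> z \<in> nc_filt d \<Longrightarrow> y + z \<in> (nc_filt d :: 'a::ring_1 set)"
  unfolding nc_filt_eq_addcl_gens by (rule addcl.add)

lemma nc_filt_minus: "y \<in> nc_filt d \<Longrightarrow> - y \<in> (nc_filt d :: 'a::ring_1 set)"
  unfolding nc_filt_eq_addcl_gens by (rule addcl.neg)

lemma nc_filt_diff: "y \<in> nc_filt d \<Longrightarrow> z \<in> nc_filt d \<Longrightarrow> y - z \<in> (nc_filt d :: 'a::ring_1 set)"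
  unfolding nc_filt_eq_addcl_gens by (rule addcl_diff)

lemma nc_filt_diff_mem_iff:
  "a - b \<in> nc_filt d \<Longrightarrow> a \<in> nc_filt d \<longleftrightarrow> b \<in> (nc_filt d :: 'a::ring_1 set)"
proof
  assume "a - b \<in> nc_filt d" "a \<in> nc_filt d"
  then have "a - (a - b) \<in> nc_filt d" by (rule nc_filt_diff[rotated])
  then show "b \<in> nc_filt d" by simp
next
  assume "a - b \<in> nc_filt d" "b \<in> nc_filt d"
  then have "(a - b) + b \<in> nc_filt d" by (rule nc_filt_add)
  then show "a \<in> nc_filt d" by simp
qed

lemma nc_filt_mult: "y \<in> nc_filt i \<Longrightarrow> z \<in> nc_filt j \<Longrightarrow> y * z \<in> (nc_filt (i + j) :: 'a::ring_1 set)"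
  unfolding nc_filt_eq_addcl_gens by (rule addcl_mult) (auto intro: addcl.base nc_filt_gens_mult)

lemma nc_filt_mult_left: "y \<in> nc_filt d \<Longrightarrow> c * y \<in> (nc_filt d :: 'a::ring_1 set)"
  using nc_filt_mult[of c 0 y d] by (simp add: nc_filt_0)

lemma nc_filt_mult_right: "y \<in> nc_filt d \<Longrightarrow> y * c \<in> (nc_filt d :: 'a::ring_1 set)"
  using nc_filt_mult[of y d c 0] by (simp add: nc_filt_0)

lemma nc_monomial_mem_nc_filt: "nc_monomial d h \<Longrightarrow> h \<in> (nc_filt d :: 'a::ring_1 set)"
  unfolding nc_filt_eq_addcl_gens nc_filt_gens_def
  by (intro addcl.base CollectI exI[of _ 1] exI[of _ h]) simp

lemma lie_pow_subset_nc_filt: "lie_pow k \<subseteq> (nc_filt k :: 'a::ring_1 set)"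
  using nc_monomial_mem_nc_filt nc_monomial.step[OF _ nc_monomial.one, of _ k 1] by fastforce

lemma lie_pow_mult_mem_nc_filt:
  "x \<in> lie_pow k \<Longrightarrow> y \<in> nc_filt d \<Longrightarrow> x * y \<in> (nc_filt (k + d) :: 'a::ring_1 set)"
  using lie_pow_subset_nc_filt nc_filt_mult by blast

lemma nc_filt_antimono: "j \<le> i \<Longrightarrow> nc_filt i \<subseteq> (nc_filt j :: 'a::ring_1 set)"
  unfolding nc_filt_eq_addcl_gens nc_filt_gens_def
  by (rule addcl_mono) (auto intro: nc_monomial_antimono)

lemma nc_monomial_commutator:
  "nc_monomial d (h :: 'a::ring_1) \<Longrightarrow> h * r - r * h \<in> nc_filt (Suc d)"
proof (induction rule: nc_monomial.induct)
  case one
  then show ?case by (simp add: nc_filt_zero)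
next
  case (step x k d h b)
  have "x * b * h * r - r * (x * b * h) =
     (x * r - r * x) * (b * h) + x * ((b * r - r * b) * h) + x * b * (h * r - r * h)"
    by (simp add: algebra_simps)
  moreover have "(x * r - r * x) * (b * h) \<in> nc_filt (Suc (k + d))"
    using lie_pow_mult_mem_nc_filt[OF commutator_mem_lie_pow_Suc[OF step.hyps(1)]]
      nc_filt_mult_left[OF nc_monomial_mem_nc_filt[OF step.hyps(2)]] by simp
  moreover have "x * ((b * r - r * b) * h) \<in> nc_filt (k + (Suc 0 + d))"
    by (intro lie_pow_mult_mem_nc_filt step.hyps(1) commutator_mem_lie_pow_1
        nc_monomial_mem_nc_filt[OF step.hyps(2)])
  moreover have "x * b * (h * r - r * h) \<in> nc_filt (k + Suc d)"
    using nc_filt_mult[OF nc_filt_mult_right[OF lie_pow_subset_nc_filt[THEN subsetD]] step.IH]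
      step.hyps(1) by blast
  ultimately show ?case by (simp add: nc_filt_add)
qed

lemma nc_filt_commutator: "m \<in> nc_filt d \<Longrightarrow> m * r - r * m \<in> (nc_filt (Suc d) :: 'a::ring_1 set)"
  unfolding nc_filt_eq_addcl_gens[of d]
proof (induction rule: addcl.induct)
  case (base y)
  then obtain a h where y: "y = a * h" "nc_monomial d h" unfolding nc_filt_gens_def by blast
  have "a * h * r - r * (a * h) = a * (h * r - r * h) + (a * r - r * a) * h"
    by (simp add: algebra_simps)
  moreover have "(a * r - r * a) * h \<in> nc_filt (Suc 0 + d)"
    by (intro lie_pow_mult_mem_nc_filt commutator_mem_lie_pow_1 nc_monomial_mem_nc_filt[OF y(2)])
  ultimately show ?case
    using nc_filt_mult_left[OF nc_monomial_commutator[OF y(2)]] y(1) by (simp add: nc_filt_add)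
next
  case (add x y)
  have "(x + y) * r - r * (x + y) = (x * r - r * x) + (y * r - r * y)" by (simp add: algebra_simps)
  then show ?case using add by (simp add: nc_filt_add)
next
  case (neg x)
  have "(- x) * r - r * (- x) = - (x * r - r * x)" by (simp add: algebra_simps)
  then show ?case using nc_filt_minus[OF neg.IH] by simp
qed (simp add: nc_filt_zero)

lemma nc_filt_ring_hom: "ring_hom_fun \<phi> \<Longrightarrow> m \<in> nc_filt d \<Longrightarrow> \<phi> m \<in> nc_filt d"
proof -
  assume hom: "ring_hom_fun \<phi>" and "m \<in> nc_filt d"
  then have "\<phi> m \<in> addcl (\<phi> ` nc_filt_gens d)"
    by (simp add: nc_filt_eq_addcl_gens addcl_image ring_hom_fun_simps)
  also have "\<dots> \<subseteq> addcl (nc_filt_gens d)"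
    unfolding nc_filt_gens_def
    by (rule addcl_mono) (use hom nc_monomial_ring_hom in \<open>fastforce simp: ring_hom_fun_simps\<close>)
  finally show ?thesis by (simp add: nc_filt_eq_addcl_gens)
qed

section \<open>The filtration of a ring of fractions\<close>

lemma commutator_mult_left:
  fixes x w z :: "'a::ring"
  shows "x * w * z - z * (x * w) = x * (w * z - z * w) + (x * z - z * x) * w"
  by (simp add: algebra_simps)

lemma commutator_mult_right:
  fixes y v z :: "'a::ring"
  shows "z * (y * v) - y * v * z = (z * y - y * z) * v + y * (z * v - v * z)"
  by (simp add: algebra_simps)

lemma commutator_unit:
  fixes w u y :: "'a::ring_1"
  assumes "w * u = 1" "u * w = 1"
  shows "w * y - y * w = w * (y * u - u * y) * w"
proof -
  have "w * (y * u - u * y) * w = w * y * (u * w) - (w * u) * y * w" by (simp add: algebra_simps)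
  then show ?thesis using assms by simp
qed

locale nc_fractions =
  fixes S :: "'a::ring_1 set" and \<phi> :: "'a \<Rightarrow> 'b::ring_1"
  assumes fractions: "ring_of_fractions S \<phi>"
    and one_mem: "1 \<in> S"
    and mult_mem: "s \<in> S \<Longrightarrow> t \<in> S \<Longrightarrow> s * t \<in> S"
    and nilpotent: "nc_nilpotent TYPE('a)"
begin

lemma hom: "ring_hom_fun \<phi>"
  using fractions unfolding ring_of_fractions_def by blast

lemmas hom_simps [simp] = ring_hom_fun_simps[OF hom]

lemma fraction_exists: "\<exists>a. \<exists>s\<in>S. q * \<phi> s = \<phi> a"
  using fractions unfolding ring_of_fractions_def by blast

lemma kernel_annihilated: "\<phi> a = 0 \<Longrightarrow> \<exists>s\<in>S. a * s = 0"
  using fractions unfolding ring_of_fractions_def by blast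

definition sinv :: "'a \<Rightarrow> 'b" where
  "sinv s = (SOME u. u * \<phi> s = 1 \<and> \<phi> s * u = 1)"

lemma sinv_left: "s \<in> S \<Longrightarrow> sinv s * \<phi> s = 1"
  and sinv_right: "s \<in> S \<Longrightarrow> \<phi> s * sinv s = 1"
  using someI_ex[of "\<lambda>u. u * \<phi> s = 1 \<and> \<phi> s * u = 1"] fractions
  unfolding sinv_def ring_of_fractions_def by blast+

lemma sinv_left_cancel: "s \<in> S \<Longrightarrow> sinv s * (\<phi> s * x) = x"
  and sinv_right_cancel: "s \<in> S \<Longrightarrow> \<phi> s * (sinv s * x) = x"
  by (simp_all add: mult.assoc[symmetric] sinv_left sinv_right)

lemma sinv_mult: "s \<in> S \<Longrightarrow> t \<in> S \<Longrightarrow> sinv (s * t) = sinv t * sinv s"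
proof -
  assume s: "s \<in> S" and t: "t \<in> S"
  have "sinv (s * t) = sinv (s * t) * (\<phi> s * (\<phi> t * sinv t) * sinv s)"
    using sinv_right[OF s] sinv_right[OF t] by simp
  also have "\<dots> = sinv t * sinv s"
    using sinv_left[OF mult_mem[OF s t]] by (simp add: mult.assoc[symmetric])
  finally show ?thesis .
qed

lemma mult_sinv_eq_iff: "s \<in> S \<Longrightarrow> q = p * sinv s \<longleftrightarrow> q * \<phi> s = p"
  by (metis mult.assoc mult.right_neutral sinv_left sinv_right)

lemma sinv_commutator: "t \<in> S \<Longrightarrow> sinv t * y - y * sinv t = sinv t * (y * \<phi> t - \<phi> t * y) * sinv t"
  using commutator_unit sinv_left sinv_right by blast

definition frac_filt :: "nat \<Rightarrow> 'b set" where
  "frac_filt d = {q. \<exists>s\<in>S. \<exists>m\<in>nc_filt d. q * \<phi> s = \<phi> m}"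

lemma frac_filt_iff: "q \<in> frac_filt d \<longleftrightarrow> (\<exists>s\<in>S. \<exists>m\<in>nc_filt d. q = \<phi> m * sinv s)"
  unfolding frac_filt_def using mult_sinv_eq_iff by auto

lemma phi_mult_sinv_mem_frac_filt: "m \<in> nc_filt d \<Longrightarrow> s \<in> S \<Longrightarrow> \<phi> m * sinv s \<in> frac_filt d"
  unfolding frac_filt_iff by blast

lemma phi_mem_frac_filt: "m \<in> nc_filt d \<Longrightarrow> \<phi> m \<in> frac_filt d"
  unfolding frac_filt_def using one_mem by force

lemma frac_filt_0: "frac_filt 0 = UNIV"
  unfolding frac_filt_def nc_filt_0 using fraction_exists by blast

lemma frac_filt_zero: "0 \<in> frac_filt d"
  using phi_mem_frac_filt[OF nc_filt_zero] by simp

lemma frac_filt_minus: "q \<in> frac_filt d \<Longrightarrow> - q \<in> frac_filt d"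
  unfolding frac_filt_iff by (metis hom_simps(6) minus_mult_left nc_filt_minus)

lemma frac_filt_mult_right: "q \<in> frac_filt d \<Longrightarrow> q * p \<in> frac_filt d"
proof -
  assume "q \<in> frac_filt d"
  then obtain s m where sm: "s \<in> S" "m \<in> nc_filt d" "q = \<phi> m * sinv s"
    unfolding frac_filt_iff by blast
  obtain a t where at: "t \<in> S" "sinv s * p * \<phi> t = \<phi> a" using fraction_exists by blast
  then have "q * p * \<phi> t = \<phi> (m * a)" using sm(3) by (simp add: mult.assoc)
  then show ?thesis unfolding frac_filt_def using at(1) nc_filt_mult_right[OF sm(2)] by blast
qed

lemma frac_filt_mult_left_phi: "q \<in> frac_filt d \<Longrightarrow> \<phi> a * q \<in> frac_filt d"
proof -
  assume "q \<in> frac_filt d"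
  then obtain s m where sm: "s \<in> S" "m \<in> nc_filt d" "q * \<phi> s = \<phi> m"
    unfolding frac_filt_def by blast
  then have "\<phi> a * q * \<phi> s = \<phi> (a * m)" by (simp add: mult.assoc)
  then show ?thesis unfolding frac_filt_def using sm(1) nc_filt_mult_left[OF sm(2)] by blast
qed

lemma frac_filt_add: "q \<in> frac_filt d \<Longrightarrow> q' \<in> frac_filt d \<Longrightarrow> q + q' \<in> frac_filt d"
proof -
  assume q: "q \<in> frac_filt d" and q': "q' \<in> frac_filt d"
  then obtain s m where sm: "s \<in> S" "m \<in> nc_filt d" "q * \<phi> s = \<phi> m"
    unfolding frac_filt_def by blast
  obtain u m' where um: "u \<in> S" "m' \<in> nc_filt d" "q' * \<phi> s * \<phi> u = \<phi> m'"
    using frac_filt_mult_right[OF q'] unfolding frac_filt_def by blast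
  have "(q + q') * \<phi> (s * u) = \<phi> (m * u + m')"
    using sm(3) um(3) by (simp add: distrib_right mult.assoc[symmetric])
  moreover have "m * u + m' \<in> nc_filt d" by (intro nc_filt_add nc_filt_mult_right sm(2) um(2))
  ultimately show ?thesis unfolding frac_filt_def using mult_mem[OF sm(1) um(1)] by blast
qed

lemma frac_filt_Suc_subset: "frac_filt (Suc d) \<subseteq> frac_filt d"
  unfolding frac_filt_def using nc_filt_antimono[of d "Suc d", where 'a='a] by auto

text \<open>The only use of the nilpotence of \<open>R\<close>.\<close>

lemma sinv_mult_phi_mem_frac_filt:
  assumes "m \<in> nc_filt d" "t \<in> S"
  shows "sinv t * \<phi> m \<in> frac_filt d"
proof -
  obtain N where N: "\<And>i. N \<le> i \<Longrightarrow> nc_filt i = ({0} :: 'a set)"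
    using nilpotent unfolding nc_nilpotent_def by blast
  show ?thesis
    using assms
  proof (induction "N - d" arbitrary: d m rule: less_induct)
    case less
    show ?case
    proof (cases "N \<le> d")
      case True
      then show ?thesis using N less.prems(1) frac_filt_zero by auto
    next
      case False
      have "sinv t * \<phi> (m * t - t * m) \<in> frac_filt (Suc d)"
      proof (rule less.hyps)
        show "N - Suc d < N - d" using False by simp
        show "m * t - t * m \<in> nc_filt (Suc d)" using less.prems(1) by (rule nc_filt_commutator)
      qed (rule refl less.prems(2))+
      then have "sinv t * \<phi> (m * t - t * m) * sinv t \<in> frac_filt d"
        using frac_filt_Suc_subset frac_filt_mult_right by blast
      moreover have "sinv t * \<phi> m = sinv t * \<phi> (m * t - t * m) * sinv t + \<phi> m * sinv t"
        using sinv_commutator[OF less.prems(2), of "\<phi> m", unfolded diff_eq_eq]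
        by (simp only: hom_simps)
      ultimately show ?thesis
        using frac_filt_add phi_mult_sinv_mem_frac_filt less.prems by metis
    qed
  qed
qed

lemma frac_filt_mult_left: "q \<in> frac_filt d \<Longrightarrow> p * q \<in> frac_filt d"
proof -
  assume "q \<in> frac_filt d"
  then obtain s m where sm: "s \<in> S" "m \<in> nc_filt d" "q = \<phi> m * sinv s"
    unfolding frac_filt_iff by blast
  obtain a t where at: "t \<in> S" "p * \<phi> t = \<phi> a" using fraction_exists by blast
  then have "p = \<phi> a * sinv t" using mult_sinv_eq_iff by blast
  then have "p * q = \<phi> a * (sinv t * \<phi> m * sinv s)" using sm(3) by (simp add: mult.assoc)
  then show ?thesis
    using frac_filt_mult_left_phi[OF frac_filt_mult_right[OF sinv_mult_phi_mem_frac_filt[OF sm(2) at(1)]]]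
    by simp
qed

lemma frac_filt_mult: "q \<in> frac_filt i \<Longrightarrow> q' \<in> frac_filt j \<Longrightarrow> q * q' \<in> frac_filt (i + j)"
proof -
  assume q: "q \<in> frac_filt i" and q': "q' \<in> frac_filt j"
  obtain s m where sm: "s \<in> S" "m \<in> nc_filt i" "q = \<phi> m * sinv s"
    using q unfolding frac_filt_iff by blast
  obtain u m' where um: "u \<in> S" "m' \<in> nc_filt j" "sinv s * q' * \<phi> u = \<phi> m'"
    using frac_filt_mult_left[OF q'] unfolding frac_filt_def by blast
  have "q * q' * \<phi> u = \<phi> (m * m')" using sm(3) um(3) by (simp add: mult.assoc)
  then show ?thesis unfolding frac_filt_def using um(1) nc_filt_mult[OF sm(2) um(2)] by blast
qed

lemma commutator_phi_mem_frac_filt: "m \<in> nc_filt k \<Longrightarrow> p * \<phi> m - \<phi> m * p \<in> frac_filt (Suc k)"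
proof -
  assume m: "m \<in> nc_filt k"
  obtain a t where at: "t \<in> S" "p * \<phi> t = \<phi> a" using fraction_exists by blast
  then have "p = \<phi> a * sinv t" using mult_sinv_eq_iff by blast
  then have "p * \<phi> m - \<phi> m * p
      = \<phi> a * (sinv t * \<phi> m - \<phi> m * sinv t) + (\<phi> a * \<phi> m - \<phi> m * \<phi> a) * sinv t"
    by (simp only: commutator_mult_left)
  also have "\<dots> = \<phi> a * (sinv t * \<phi> (m * t - t * m) * sinv t) + \<phi> (a * m - m * a) * sinv t"
    by (simp only: hom_simps sinv_commutator[OF at(1)])
  also have "\<dots> \<in> frac_filt (Suc k)"
  proof (rule frac_filt_add)
    show "\<phi> a * (sinv t * \<phi> (m * t - t * m) * sinv t) \<in> frac_filt (Suc k)"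
      using m by (intro frac_filt_mult_left frac_filt_mult_right phi_mem_frac_filt nc_filt_commutator)
    have "a * m - m * a \<in> nc_filt (Suc k)"
      using nc_filt_minus[OF nc_filt_commutator[OF m, of a]] by simp
    then show "\<phi> (a * m - m * a) * sinv t \<in> frac_filt (Suc k)"
      by (intro frac_filt_mult_right phi_mem_frac_filt)
  qed
  finally show ?thesis .
qed

lemma commutator_mem_frac_filt: "q \<in> frac_filt k \<Longrightarrow> p * q - q * p \<in> frac_filt (Suc k)"
proof -
  assume q: "q \<in> frac_filt k"
  obtain s m where sm: "s \<in> S" "m \<in> nc_filt k" "q = \<phi> m * sinv s"
    using q unfolding frac_filt_iff by blast
  have "p * \<phi> s - \<phi> s * p \<in> frac_filt (Suc 0)"
    by (rule commutator_phi_mem_frac_filt) (simp add: nc_filt_0)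
  from frac_filt_mult[OF q this] have "q * (p * \<phi> s - \<phi> s * p) * sinv s \<in> frac_filt (Suc k)"
    by (simp add: frac_filt_mult_right)
  moreover have "\<phi> m * (sinv s * p - p * sinv s) = q * (p * \<phi> s - \<phi> s * p) * sinv s"
    using sinv_commutator[OF sm(1), of p] sm(3) by (simp only: mult.assoc)
  ultimately have "\<phi> m * (p * sinv s - sinv s * p) \<in> frac_filt (Suc k)"
    using frac_filt_minus by (metis minus_diff_eq mult_minus_right)
  moreover have "(p * \<phi> m - \<phi> m * p) * sinv s \<in> frac_filt (Suc k)"
    by (intro frac_filt_mult_right commutator_phi_mem_frac_filt sm(2))
  ultimately show ?thesis
    using commutator_mult_right[of p "\<phi> m" "sinv s"] sm(3) frac_filt_add by simp
qed

lemma lie_pow_subset_frac_filt: "lie_pow k \<subseteq> frac_filt k"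
proof (induction k)
  case 0
  then show ?case by (simp add: frac_filt_0)
next
  case (Suc k)
  show ?case unfolding lie_pow.simps
  proof (rule addcl_least)
    show "{a * x - x * a |a x. x \<in> lie_pow k} \<subseteq> frac_filt (Suc k)"
      using Suc.IH commutator_mem_frac_filt by blast
  qed (simp_all add: frac_filt_zero frac_filt_add frac_filt_minus)
qed

lemma nc_monomial_mem_frac_filt: "nc_monomial d h \<Longrightarrow> h \<in> frac_filt d"
proof (induction rule: nc_monomial.induct)
  case one
  then show ?case by (simp add: frac_filt_0)
next
  case (step x k d h b)
  have "x * b \<in> frac_filt k"
    using lie_pow_subset_frac_filt step.hyps(1) by (blast intro: frac_filt_mult_right)
  then show ?case using frac_filt_mult step.IH by blast
qed

lemma nc_filt_eq_frac_filt: "nc_filt d = frac_filt d"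
proof
  show "nc_filt d \<subseteq> frac_filt d"
    unfolding nc_filt_eq_addcl_gens[of d]
  proof (rule addcl_least)
    show "nc_filt_gens d \<subseteq> frac_filt d"
      unfolding nc_filt_gens_def using nc_monomial_mem_frac_filt frac_filt_mult_left by blast
  qed (simp_all add: frac_filt_zero frac_filt_add frac_filt_minus)
  show "frac_filt d \<subseteq> nc_filt d"
  proof
    fix q assume "q \<in> frac_filt d"
    then obtain s m where "m \<in> nc_filt d" "q = \<phi> m * sinv s" unfolding frac_filt_iff by blast
    then show "q \<in> nc_filt d" using nc_filt_mult_right[OF nc_filt_ring_hom[OF hom]] by simp
  qed
qed

lemma nc_nilpotent_localization: "nc_nilpotent TYPE('b)"
proof -
  obtain N where N: "\<And>i. N \<le> i \<Longrightarrow> nc_filt i = ({0} :: 'a set)"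
    using nilpotent unfolding nc_nilpotent_def by blast
  have "nc_filt i = ({0} :: 'b set)" if "N \<le> i" for i
  proof
    show "(nc_filt i :: 'b set) \<subseteq> {0}"
    proof
      fix q :: 'b assume "q \<in> nc_filt i"
      then obtain s m where "m \<in> nc_filt i" "q = \<phi> m * sinv s"
        unfolding nc_filt_eq_frac_filt frac_filt_iff by blast
      then show "q \<in> {0}" using N[OF that] by simp
    qed
    show "{0} \<subseteq> (nc_filt i :: 'b set)" using nc_filt_zero by blast
  qed
  then show ?thesis unfolding nc_nilpotent_def by blast
qed

lemma phi_mem_nc_filt_Suc_iff:
  assumes "x \<in> nc_filt d"
  shows "\<phi> x \<in> nc_filt (Suc d) \<longleftrightarrow> (\<exists>t\<in>S. t * x \<in> nc_filt (Suc d))"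
proof
  assume "\<phi> x \<in> nc_filt (Suc d)"
  then obtain u m where um: "u \<in> S" "m \<in> nc_filt (Suc d)" "\<phi> x * \<phi> u = \<phi> m"
    unfolding nc_filt_eq_frac_filt frac_filt_def by blast
  then have "\<phi> (x * u - m) = 0" by simp
  then obtain v where v: "v \<in> S" "(x * u - m) * v = 0" using kernel_annihilated by blast
  then have "x * (u * v) = m * v" by (simp add: left_diff_distrib mult.assoc)
  then have "x * (u * v) \<in> nc_filt (Suc d)" using nc_filt_mult_right[OF um(2)] by simp
  moreover have "x * (u * v) - u * v * x \<in> nc_filt (Suc d)" using assms by (rule nc_filt_commutator)
  ultimately have "u * v * x \<in> nc_filt (Suc d)" using nc_filt_diff_mem_iff by blast
  then show "\<exists>t\<in>S. t * x \<in> nc_filt (Suc d)" using mult_mem[OF um(1) v(1)] by blast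
next
  assume "\<exists>t\<in>S. t * x \<in> nc_filt (Suc d)"
  then obtain t where t: "t \<in> S" "t * x \<in> nc_filt (Suc d)" by blast
  have "sinv t * \<phi> (t * x) \<in> nc_filt (Suc d)"
    by (intro nc_filt_mult_left nc_filt_ring_hom[OF hom] t(2))
  then show "\<phi> x \<in> nc_filt (Suc d)" using sinv_left_cancel[OF t(1)] by simp
qed

definition frac :: "'a \<times> 'a \<Rightarrow> 'b" where
  "frac = (\<lambda>(m, s). \<phi> m * sinv s)"

lemma frac_apply [simp]: "frac (m, s) = \<phi> m * sinv s"
  by (simp add: frac_def)

lemma frac_mem_nc_filt: "m \<in> nc_filt d \<Longrightarrow> frac (m, s) \<in> nc_filt d"
  unfolding frac_apply by (intro nc_filt_mult_right nc_filt_ring_hom[OF hom])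

lemma frac_surj: "q \<in> nc_filt d \<Longrightarrow> \<exists>m\<in>nc_filt d. \<exists>s\<in>S. frac (m, s) = q"
  unfolding nc_filt_eq_frac_filt frac_filt_iff by auto

lemma frac_mult_left: "\<phi> a * frac (m, s) = frac (a * m, s)"
  by (simp add: mult.assoc)

lemma frac_add_congr:
  assumes m: "m \<in> nc_filt d" and s: "s \<in> S" and m': "m' \<in> nc_filt d" and s': "s' \<in> S"
  shows "frac (m, s) + frac (m', s') - frac (s' * m + s * m', s * s') \<in> nc_filt (Suc d)"
proof -
  define z where "z = \<phi> m * sinv s'"
  define y where "y = \<phi> m' * sinv s'"
  have "\<phi> m * sinv s - \<phi> (s' * m) * sinv (s * s') = (z * \<phi> s' - \<phi> s' * z) * sinv s"
    unfolding z_def sinv_mult[OF s s'] using sinv_left_cancel[OF s']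
    by (simp add: left_diff_distrib mult.assoc)
  moreover have "\<phi> m' * sinv s' - \<phi> (s * m') * sinv (s * s') = (y * \<phi> s - \<phi> s * y) * sinv s"
    unfolding y_def sinv_mult[OF s s'] using sinv_right[OF s] sinv_right_cancel[OF s]
    by (simp add: left_diff_distrib mult.assoc)
  moreover have "z \<in> nc_filt d" "y \<in> nc_filt d"
    unfolding z_def y_def using frac_mem_nc_filt m m' by simp_all
  ultimately have "(\<phi> m * sinv s - \<phi> (s' * m) * sinv (s * s'))
      + (\<phi> m' * sinv s' - \<phi> (s * m') * sinv (s * s')) \<in> nc_filt (Suc d)"
    by (simp add: nc_filt_add nc_filt_mult_right nc_filt_commutator)
  then show ?thesis
    by (simp only: frac_apply hom_simps(2) distrib_right add_diff_add)
qed

lemma frac_diff_congr: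
  assumes "m \<in> nc_filt d" "s \<in> S" "m' \<in> nc_filt d" "s' \<in> S"
  shows "frac (m, s) - frac (m', s') - frac (s' * m - s * m', s * s') \<in> nc_filt (Suc d)"
  using frac_add_congr[OF assms(1,2) nc_filt_minus[OF assms(3)] assms(4)] by simp

lemma mult_sinv_mem_nc_filt_iff: "s \<in> S \<Longrightarrow> q * sinv s \<in> nc_filt k \<longleftrightarrow> q \<in> nc_filt k"
  by (metis mult_sinv_eq_iff nc_filt_mult_right)

lemma frac_rel_iff:
  assumes m: "m \<in> nc_filt d" and s: "s \<in> S" and m': "m' \<in> nc_filt d" and s': "s' \<in> S"
  shows "frac_rel d S (m, s) (m', s') \<longleftrightarrow> frac (m, s) - frac (m', s') \<in> nc_filt (Suc d)"
proof -
  have x: "s' * m - s * m' \<in> nc_filt d" by (intro nc_filt_diff nc_filt_mult_left m m')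
  have "frac_rel d S (m, s) (m', s') \<longleftrightarrow> \<phi> (s' * m - s * m') \<in> nc_filt (Suc d)"
    unfolding frac_rel_def using phi_mem_nc_filt_Suc_iff[OF x] by simp
  also have "\<dots> \<longleftrightarrow> frac (s' * m - s * m', s * s') \<in> nc_filt (Suc d)"
    unfolding frac_apply by (rule mult_sinv_mem_nc_filt_iff[OF mult_mem[OF s s'], symmetric])
  also have "\<dots> \<longleftrightarrow> frac (m, s) - frac (m', s') \<in> nc_filt (Suc d)"
    using nc_filt_diff_mem_iff[OF frac_diff_congr[OF assms]] by blast
  finally show ?thesis .
qed

lemma gr_frac_iso_frac: "gr_frac_iso d S \<phi> frac"
  unfolding gr_frac_iso_def
proof (intro conjI ballI allI)
  fix m s :: 'a assume "m \<in> nc_filt d"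
  then show "frac (m, s) \<in> nc_filt d" by (rule frac_mem_nc_filt)
next
  fix m s m' s' :: 'a assume "m \<in> nc_filt d" "s \<in> S" "m' \<in> nc_filt d" "s' \<in> S"
  then show "frac_rel d S (m, s) (m', s') \<longleftrightarrow> frac (m, s) - frac (m', s') \<in> nc_filt (Suc d)"
    and "frac (m, s) + frac (m', s') - frac (s' * m + s * m', s * s') \<in> nc_filt (Suc d)"
    by (rule frac_rel_iff frac_add_congr)+
next
  fix q :: 'b assume "q \<in> nc_filt d"
  then show "\<exists>m\<in>nc_filt d. \<exists>s\<in>S. frac (m, s) - q \<in> nc_filt (Suc d)"
    using frac_surj nc_filt_zero by (metis diff_self)
next
  fix a m s :: 'a
  show "\<phi> a * frac (m, s) - frac (a * m, s) \<in> nc_filt (Suc d)"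
    unfolding frac_mult_left by (simp only: diff_self nc_filt_zero)
qed

end

theorem theorem2p1p6:
  fixes \<iota> :: "complex \<Rightarrow> 'a::ring_1" and Sbar :: "'a set set" and \<phi> :: "'a \<Rightarrow> 'b::ring_1"
  assumes "complex_algebra_str \<iota>"
    and "nc_nilpotent TYPE('a)"
    and "ab_mult_subset Sbar"
    and "ring_of_fractions (ab_preimage Sbar) \<phi>"
  shows "nc_nilpotent TYPE('b) \<and> (\<forall>d. \<exists>f. gr_frac_iso d (ab_preimage Sbar) \<phi> f)"
proof -
  interpret nc_fractions "ab_preimage Sbar" \<phi>
  proof
    show "1 \<in> ab_preimage Sbar"
      and "\<And>s t. s \<in> ab_preimage Sbar \<Longrightarrow> t \<in> ab_preimage Sbar \<Longrightarrow> s * t \<in> ab_preimage Sbar"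
      using assms(3) unfolding ab_mult_subset_def ab_preimage_def by blast+
  qed (fact assms(4) assms(2))+
  show ?thesis using nc_nilpotent_localization gr_frac_iso_frac by blast
qed

end
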